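(* In the setting below, with $\mu$ the limit chemical potential and $F=\{z>0\}$, along the subsequence as $\varepsilon\to0^+$: $m(z_\varepsilon)\nabla\mu_\varepsilon\rightharpoonup m(z)\nabla\mu$ weakly in $L^2(F;\mathbb R^n)$, and $m(z_\varepsilon)\nabla\mu_\varepsilon\to0$ strongly in $L^2(\Omega_T\setminus F;\mathbb R^n)$.
   Context: Setting: $\Omega\subseteq\mathbb R^n$ bounded $\mathcal C^2$-domain, $p>n$, $\Omega_T=\Omega\times(0,T)$; $m\in\mathcal C([0,1];[0,\infty))$ with $m(z)=0$ iff $z=0$; $(c_\varepsilon,u_\varepsilon,z_\varepsilon,\mu_\varepsilon)$ solutions of the $\varepsilon$-regularized coupled problem (mobility $m+\varepsilon$), satisfying $\|(m(z_\varepsilon)+\varepsilon)^{1/2}\nabla\mu_\varepsilon\|_{L^2(\Omega_T)}\le C$, $0\le z_\varepsilon\le1$; a subsequence with $z_\varepsilon\to z$ in $\mathcal C(\overline{\Omega_T})$; $F:=\{(x,t)\in\overline{\Omega_T}:z(x,t)>0\}$; $\mu\in L^2_tH^1_{x,\mathrm{loc}}(F)$ is the function with $\mu_\varepsilon\rightharpoonup\mu$ in $L^2(0,t_m;H^1(U^m_k))$ for all $k,m$, where $\{t_m\}$ is dense in $[0,T]$ containing $T$ and $\{U^m_k\}_k$ is a fine representation of $F(t_m)$ (a countable family of open $U_k\subset\subset F(t_m)$ such that each $x\in F(t_m)$ has an open neighborhood $U\subseteq\mathbb R^n$ with $U\cap\Omega\subseteq U_k$ for some $k$). *)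

theory Defs
  imports "HOL-Analysis.Analysis"
begin

text \<open>Points of space-time are pairs (x,t) with x in 'a (= R^n, n = DIM('a)) and t real.
Lebesgue measure on 'a \<times> real is the (n+1)-dimensional Lebesgue measure.\<close>

definition L2_on :: "('b::euclidean_space) set \<Rightarrow> ('b \<Rightarrow> 'c::euclidean_space) \<Rightarrow> bool" where
  "L2_on A f \<longleftrightarrow> f \<in> borel_measurable (lebesgue_on A)
      \<and> integrable (lebesgue_on A) (\<lambda>p. (norm (f p))\<^sup>2)"

definition weak_L2_conv ::
  "('b::euclidean_space) set \<Rightarrow> (nat \<Rightarrow> 'b \<Rightarrow> 'c::euclidean_space) \<Rightarrow> ('b \<Rightarrow> 'c) \<Rightarrow> bool" where
  "weak_L2_conv A fs f \<longleftrightarrow> (\<forall>k. L2_on A (fs k)) \<and> L2_on A f \<and>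
     (\<forall>g. L2_on A g \<longrightarrow>
        (\<lambda>k. \<integral>p. fs k p \<bullet> g p \<partial>lebesgue_on A) \<longlonglongrightarrow> (\<integral>p. f p \<bullet> g p \<partial>lebesgue_on A))"

definition strong_L2_conv ::
  "('b::euclidean_space) set \<Rightarrow> (nat \<Rightarrow> 'b \<Rightarrow> 'c::euclidean_space) \<Rightarrow> ('b \<Rightarrow> 'c) \<Rightarrow> bool" where
  "strong_L2_conv A fs f \<longleftrightarrow> (\<forall>k. L2_on A (fs k)) \<and> L2_on A f \<and>
     (\<lambda>k. \<integral>p. (norm (fs k p - f p))\<^sup>2 \<partial>lebesgue_on A) \<longlonglongrightarrow> 0"

definition test_fun ::
  "('a::euclidean_space \<times> real) set \<Rightarrow> ('a \<times> real \<Rightarrow> real) \<Rightarrow> ('a \<times> real \<Rightarrow> ('a \<times> real) \<Rightarrow>\<^sub>L real) \<Rightarrow> bool" where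
  "test_fun D \<phi> D\<phi> \<longleftrightarrow> (\<forall>p. (\<phi> has_derivative blinfun_apply (D\<phi> p)) (at p))
     \<and> continuous_on UNIV D\<phi>
     \<and> compact (closure {p. \<phi> p \<noteq> 0}) \<and> closure {p. \<phi> p \<noteq> 0} \<subseteq> D"

definition weak_grad_x ::
  "('a::euclidean_space \<times> real) set \<Rightarrow> ('a \<times> real \<Rightarrow> real) \<Rightarrow> ('a \<times> real \<Rightarrow> 'a) \<Rightarrow> bool" where
  "weak_grad_x D u G \<longleftrightarrow> (\<forall>\<phi> D\<phi>. test_fun D \<phi> D\<phi> \<longrightarrow> (\<forall>i\<in>Basis.
      (\<integral>p. u p * blinfun_apply (D\<phi> p) (i, 0) \<partial>lebesgue_on D)
        = - (\<integral>p. (G p \<bullet> i) * \<phi> p \<partial>lebesgue_on D)))"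

definition L2H1 :: "'a::euclidean_space set \<Rightarrow> real \<Rightarrow> ('a \<times> real \<Rightarrow> real) \<Rightarrow> ('a \<times> real \<Rightarrow> 'a) \<Rightarrow> bool" where
  "L2H1 U t u G \<longleftrightarrow> L2_on (U \<times> {0<..<t}) u \<and> L2_on (U \<times> {0<..<t}) G
      \<and> weak_grad_x (U \<times> {0<..<t}) u G"

definition weak_L2H1_conv ::
  "'a::euclidean_space set \<Rightarrow> real \<Rightarrow> (nat \<Rightarrow> 'a \<times> real \<Rightarrow> real) \<Rightarrow> (nat \<Rightarrow> 'a \<times> real \<Rightarrow> 'a)
     \<Rightarrow> ('a \<times> real \<Rightarrow> real) \<Rightarrow> ('a \<times> real \<Rightarrow> 'a) \<Rightarrow> bool" where
  "weak_L2H1_conv U t us Gs u G \<longleftrightarrow> (\<forall>k. L2H1 U t (us k) (Gs k)) \<and> L2H1 U t u G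
     \<and> weak_L2_conv (U \<times> {0<..<t}) us u \<and> weak_L2_conv (U \<times> {0<..<t}) Gs G"

definition C2_domain :: "'a::euclidean_space set \<Rightarrow> bool" where
  "C2_domain \<Omega> \<longleftrightarrow> open \<Omega> \<and> connected \<Omega> \<and>
     (\<exists>\<rho> (D::'a \<Rightarrow> 'a \<Rightarrow>\<^sub>L real) (D2::'a \<Rightarrow> 'a \<Rightarrow>\<^sub>L ('a \<Rightarrow>\<^sub>L real)).
        (\<forall>x. (\<rho> has_derivative blinfun_apply (D x)) (at x))
      \<and> (\<forall>x. (D has_derivative blinfun_apply (D2 x)) (at x))
      \<and> continuous_on UNIV D2
      \<and> \<Omega> = {x. \<rho> x < 0}
      \<and> (\<forall>x. \<rho> x = 0 \<longrightarrow> D x \<noteq> 0))"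

definition fine_rep :: "'a::euclidean_space set \<Rightarrow> 'a set \<Rightarrow> (nat \<Rightarrow> 'a set) \<Rightarrow> bool" where
  "fine_rep \<Omega> S Us \<longleftrightarrow> (\<forall>k. open (Us k) \<and> compact (closure (Us k)) \<and> closure (Us k) \<subseteq> S)
     \<and> (\<forall>x\<in>S. \<exists>V. open V \<and> x \<in> V \<and> (\<exists>k. V \<inter> \<Omega> \<subseteq> Us k))"

end

theory Submission
  imports Defs
begin

(* Where the limit phase field z vanishes, m(z_\<epsilon>) tends to m(0) = 0 uniformly, so the energy
   bound \<integral> m(z_\<epsilon>) |\<nabla>\<mu>_\<epsilon>|^2 \<le> C^2 forces m(z_\<epsilon>) \<nabla>\<mu>_\<epsilon> \<rightarrow> 0 in L^2 there.
   On F the mobility m(z_\<epsilon>) is eventually bounded below on every level set {z \<ge> \<delta>}, so \<nabla>\<mu>_\<epsilon>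
   is bounded in L^2 there. The cylinders U^m_k \<times> (0, t_m) cover F \<inter> \<Omega>_T and \<nabla>\<mu>_\<epsilon> \<rightharpoonup> \<nabla>\<mu>
   on each of them; as m(z_\<epsilon>) = m(z) + o(1) uniformly, this gives m(z_\<epsilon>) \<nabla>\<mu>_\<epsilon> \<rightharpoonup> m(z) \<nabla>\<mu>
   against test functions supported in finitely many cylinders and one level set. Weak lower
   semicontinuity bounds \<integral> m(z) |\<nabla>\<mu>|^2 over these sets by C^2, so m(z) \<nabla>\<mu> \<in> L^2(F) by
   monotone convergence; since the sets exhaust F and m(z_\<epsilon>) \<nabla>\<mu>_\<epsilon> is bounded in L^2, the
   convergence extends to all test functions in L^2(F). *)

definition square_integrable :: "'b measure \<Rightarrow> ('b \<Rightarrow> 'c::euclidean_space) \<Rightarrow> bool" where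
  "square_integrable M f \<longleftrightarrow> f \<in> borel_measurable M \<and> integrable M (\<lambda>x. (norm (f x))\<^sup>2)"

lemma L2_on_iff_square_integrable: "L2_on A f \<longleftrightarrow> square_integrable (lebesgue_on A) f"
  by (simp add: L2_on_def square_integrable_def)

lemma square_integrableD:
  "square_integrable M f \<Longrightarrow> f \<in> borel_measurable M"
  "square_integrable M f \<Longrightarrow> integrable M (\<lambda>x. (norm (f x))\<^sup>2)"
  by (simp_all add: square_integrable_def)

lemma square_integrable_zero [simp]: "square_integrable M (\<lambda>_. 0)"
  by (simp add: square_integrable_def)

lemma integrable_abs_integral_le:
  fixes h b :: "'b \<Rightarrow> real"
  assumes b: "integrable M b" and h: "h \<in> borel_measurable M"
    and le: "\<And>x. x \<in> space M \<Longrightarrow> \<bar>h x\<bar> \<le> b x"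
  shows "integrable M h" and "\<bar>\<integral>x. h x \<partial>M\<bar> \<le> (\<integral>x. b x \<partial>M)"
proof -
  show int_h: "integrable M h"
  proof (rule Bochner_Integration.integrable_bound[OF b h], rule AE_I2)
    fix x assume "x \<in> space M"
    with le have "\<bar>h x\<bar> \<le> b x" by blast
    then show "norm (h x) \<le> norm (b x)" by simp
  qed
  have "\<bar>\<integral>x. h x \<partial>M\<bar> \<le> (\<integral>x. \<bar>h x\<bar> \<partial>M)"
    by (rule integral_abs_bound)
  also have "\<dots> \<le> (\<integral>x. b x \<partial>M)"
    using int_h b le by (intro integral_mono) auto
  finally show "\<bar>\<integral>x. h x \<partial>M\<bar> \<le> (\<integral>x. b x \<partial>M)" .
qed

lemma inner_le_Young:
  fixes u v :: "'c::real_inner"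
  assumes "t > 0"
  shows "\<bar>u \<bullet> v\<bar> \<le> t/2 * (norm u)\<^sup>2 + 1/(2*t) * (norm v)\<^sup>2"
proof -
  have "0 \<le> (t * norm u - norm v)\<^sup>2" by simp
  then have "norm u * norm v \<le> t/2 * (norm u)\<^sup>2 + 1/(2*t) * (norm v)\<^sup>2"
    using assms by (simp add: field_simps power2_eq_square)
  then show ?thesis
    using Cauchy_Schwarz_ineq2[of u v] by linarith
qed

lemma power2_norm_scaleR_le:
  fixes v :: "'c::real_normed_vector"
  assumes "0 \<le> a" "a \<le> B"
  shows "(norm (a *\<^sub>R v))\<^sup>2 \<le> B * (a * (norm v)\<^sup>2)"
proof -
  have "(norm (a *\<^sub>R v))\<^sup>2 = a * (a * (norm v)\<^sup>2)"
    using assms(1) by (simp add: power2_eq_square)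
  also have "\<dots> \<le> B * (a * (norm v)\<^sup>2)"
    using assms by (intro mult_right_mono) auto
  finally show ?thesis .
qed

lemma square_integrable_scaleR:
  fixes h :: "'b \<Rightarrow> real"
  assumes f: "square_integrable M f" and h: "h \<in> borel_measurable M"
    and bounded: "\<And>x. x \<in> space M \<Longrightarrow> \<bar>h x\<bar> \<le> B"
  shows "square_integrable M (\<lambda>x. h x *\<^sub>R f x)"
proof -
  note [measurable] = square_integrableD(1)[OF f] h
  have "integrable M (\<lambda>x. (norm (h x *\<^sub>R f x))\<^sup>2)"
  proof (rule integrable_abs_integral_le(1))
    show "integrable M (\<lambda>x. B\<^sup>2 * (norm (f x))\<^sup>2)"
      using square_integrableD(2)[OF f] by simp
    fix x assume "x \<in> space M"
    then have "\<bar>h x\<bar>\<^sup>2 \<le> B\<^sup>2"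
      using bounded by (intro power_mono) auto
    then show "\<bar>(norm (h x *\<^sub>R f x))\<^sup>2\<bar> \<le> B\<^sup>2 * (norm (f x))\<^sup>2"
      by (simp add: power_mult_distrib mult_right_mono)
  qed measurable
  moreover have "(\<lambda>x. h x *\<^sub>R f x) \<in> borel_measurable M" by measurable
  ultimately show ?thesis
    unfolding square_integrable_def by blast
qed

lemma square_integrable_add:
  assumes f: "square_integrable M f" and g: "square_integrable M g"
  shows "square_integrable M (\<lambda>x. f x + g x)"
proof -
  note [measurable] = square_integrableD(1)[OF f] square_integrableD(1)[OF g]
  have "integrable M (\<lambda>x. (norm (f x + g x))\<^sup>2)"
  proof (rule integrable_abs_integral_le(1))
    show "integrable M (\<lambda>x. 2 * (norm (f x))\<^sup>2 + 2 * (norm (g x))\<^sup>2)"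
      using square_integrableD(2)[OF f] square_integrableD(2)[OF g] by simp
    fix x
    have "(norm (f x + g x))\<^sup>2 \<le> (norm (f x) + norm (g x))\<^sup>2"
      by (simp add: norm_triangle_ineq power_mono)
    also have "\<dots> \<le> 2 * (norm (f x))\<^sup>2 + 2 * (norm (g x))\<^sup>2"
      using zero_le_power2[of "norm (f x) - norm (g x)"] by (simp add: power2_eq_square algebra_simps)
    finally show "\<bar>(norm (f x + g x))\<^sup>2\<bar> \<le> 2 * (norm (f x))\<^sup>2 + 2 * (norm (g x))\<^sup>2"
      by simp
  qed measurable
  moreover have "(\<lambda>x. f x + g x) \<in> borel_measurable M" by measurable
  ultimately show ?thesis
    unfolding square_integrable_def by blast
qed

lemma square_integrable_diff:
  assumes "square_integrable M f" "square_integrable M g"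
  shows "square_integrable M (\<lambda>x. f x - g x)"
  using square_integrable_add[OF assms(1) square_integrable_scaleR[OF assms(2), of "\<lambda>_. -1" 1]]
  by simp

lemma integrable_weighted_inner:
  fixes w :: "'b \<Rightarrow> real"
  assumes f: "square_integrable M f" and g: "square_integrable M g"
    and w: "w \<in> borel_measurable M" and bounded: "\<And>x. x \<in> space M \<Longrightarrow> \<bar>w x\<bar> \<le> B"
  shows "integrable M (\<lambda>x. w x * (f x \<bullet> g x))"
proof -
  note [measurable] = square_integrableD(1)[OF f] square_integrableD(1)[OF g] w
  show ?thesis
  proof (rule integrable_abs_integral_le(1))
    show "integrable M (\<lambda>x. B/2 * ((norm (f x))\<^sup>2 + (norm (g x))\<^sup>2))"
      using square_integrableD(2)[OF f] square_integrableD(2)[OF g] by simp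
    fix x assume x: "x \<in> space M"
    have "\<bar>w x * (f x \<bullet> g x)\<bar> \<le> B * (1/2 * (norm (f x))\<^sup>2 + 1/(2*1) * (norm (g x))\<^sup>2)"
      unfolding abs_mult using bounded[OF x] inner_le_Young[of 1 "f x" "g x"]
      by (intro mult_mono) auto
    then show "\<bar>w x * (f x \<bullet> g x)\<bar> \<le> B/2 * ((norm (f x))\<^sup>2 + (norm (g x))\<^sup>2)"
      by (simp add: algebra_simps)
  qed measurable
qed

lemma integrable_inner:
  "square_integrable M f \<Longrightarrow> square_integrable M g \<Longrightarrow> integrable M (\<lambda>x. f x \<bullet> g x)"
  using integrable_weighted_inner[of M f g "\<lambda>_. 1" 1] by simp

lemma weighted_inner_Young:
  fixes w :: "'b \<Rightarrow> real"
  assumes f: "square_integrable M f" and g: "square_integrable M g"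
    and w: "w \<in> borel_measurable M" and w_bounds: "\<And>x. x \<in> space M \<Longrightarrow> 0 \<le> w x \<and> w x \<le> B"
    and "t > 0"
  shows "\<bar>\<integral>x. w x * (f x \<bullet> g x) \<partial>M\<bar>
      \<le> t/2 * (\<integral>x. w x * (norm (f x))\<^sup>2 \<partial>M) + 1/(2*t) * (\<integral>x. w x * (norm (g x))\<^sup>2 \<partial>M)"
proof -
  have w_abs: "\<bar>w x\<bar> \<le> B" if "x \<in> space M" for x
    using w_bounds[OF that] by simp
  have int_f: "integrable M (\<lambda>x. w x * (norm (f x))\<^sup>2)" and int_g: "integrable M (\<lambda>x. w x * (norm (g x))\<^sup>2)"
    using integrable_weighted_inner[OF f f w w_abs] integrable_weighted_inner[OF g g w w_abs]
    by (simp_all add: power2_norm_eq_inner)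
  have "\<bar>\<integral>x. w x * (f x \<bullet> g x) \<partial>M\<bar>
      \<le> (\<integral>x. t/2 * (w x * (norm (f x))\<^sup>2) + 1/(2*t) * (w x * (norm (g x))\<^sup>2) \<partial>M)"
  proof (rule integrable_abs_integral_le(2))
    show "integrable M (\<lambda>x. t/2 * (w x * (norm (f x))\<^sup>2) + 1/(2*t) * (w x * (norm (g x))\<^sup>2))"
      using int_f int_g by simp
    show "(\<lambda>x. w x * (f x \<bullet> g x)) \<in> borel_measurable M"
      using integrable_weighted_inner[OF f g w w_abs] by (rule borel_measurable_integrable)
    fix x assume x: "x \<in> space M"
    have "\<bar>w x * (f x \<bullet> g x)\<bar> \<le> w x * (t/2 * (norm (f x))\<^sup>2 + 1/(2*t) * (norm (g x))\<^sup>2)"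
      unfolding abs_mult using w_bounds[OF x] inner_le_Young[OF \<open>t > 0\<close>, of "f x" "g x"]
      by (intro mult_mono) auto
    then show "\<bar>w x * (f x \<bullet> g x)\<bar> \<le> t/2 * (w x * (norm (f x))\<^sup>2) + 1/(2*t) * (w x * (norm (g x))\<^sup>2)"
      by (simp add: algebra_simps)
  qed
  also have "\<dots> = t/2 * (\<integral>x. w x * (norm (f x))\<^sup>2 \<partial>M) + 1/(2*t) * (\<integral>x. w x * (norm (g x))\<^sup>2 \<partial>M)"
    using int_f int_g by simp
  finally show ?thesis .
qed

lemma weighted_inner_tendsto_zero:
  fixes r :: "nat \<Rightarrow> 'b \<Rightarrow> real"
  assumes r: "\<And>k. r k \<in> borel_measurable M"
    and r_small: "\<And>\<eta>. \<eta> > 0 \<Longrightarrow> eventually (\<lambda>k. \<forall>x\<in>space M. \<bar>r k x\<bar> \<le> \<eta>) sequentially"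
    and g: "\<And>k. square_integrable M (g k)"
    and g_bounded: "eventually (\<lambda>k. (\<integral>x. (norm (g k x))\<^sup>2 \<partial>M) \<le> B) sequentially"
    and \<phi>: "square_integrable M \<phi>"
  shows "(\<lambda>k. \<integral>x. r k x * (g k x \<bullet> \<phi> x) \<partial>M) \<longlonglongrightarrow> 0"
proof (rule tendstoI)
  fix e :: real assume "e > 0"
  define I where "I = (\<integral>x. (norm (\<phi> x))\<^sup>2 \<partial>M)"
  define \<eta> where "\<eta> = e / (\<bar>B\<bar> + \<bar>I\<bar> + 1)"
  have "\<eta> > 0"
    using \<open>e > 0\<close> by (simp add: \<eta>_def add_pos_nonneg)
  have "\<eta>/2 * (B + I) = \<eta> * ((B + I)/2)"
    by simp
  also have "\<dots> < \<eta> * (\<bar>B\<bar> + \<bar>I\<bar> + 1)"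
    using \<open>\<eta> > 0\<close> abs_ge_self[of B] abs_ge_self[of I] by (intro mult_strict_left_mono) auto
  also have "\<dots> = e"
    by (simp add: \<eta>_def add_pos_nonneg)
  finally have \<eta>_bound: "\<eta>/2 * (B + I) < e" .
  show "eventually (\<lambda>k. dist (\<integral>x. r k x * (g k x \<bullet> \<phi> x) \<partial>M) 0 < e) sequentially"
    using r_small[OF \<open>\<eta> > 0\<close>] g_bounded
  proof eventually_elim
    case (elim k)
    have "\<bar>\<integral>x. r k x * (g k x \<bullet> \<phi> x) \<partial>M\<bar> \<le> (\<integral>x. \<eta>/2 * ((norm (g k x))\<^sup>2 + (norm (\<phi> x))\<^sup>2) \<partial>M)"
    proof (rule integrable_abs_integral_le(2))
      show "integrable M (\<lambda>x. \<eta>/2 * ((norm (g k x))\<^sup>2 + (norm (\<phi> x))\<^sup>2))"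
        using square_integrableD(2)[OF g] square_integrableD(2)[OF \<phi>] by simp
      show "(\<lambda>x. r k x * (g k x \<bullet> \<phi> x)) \<in> borel_measurable M"
        using square_integrableD(1)[OF g] square_integrableD(1)[OF \<phi>] r by measurable
      fix x assume "x \<in> space M"
      then have "\<bar>r k x * (g k x \<bullet> \<phi> x)\<bar> \<le> \<eta> * (1/2 * (norm (g k x))\<^sup>2 + 1/(2*1) * (norm (\<phi> x))\<^sup>2)"
        unfolding abs_mult using elim(1) inner_le_Young[of 1 "g k x" "\<phi> x"]
        by (intro mult_mono) auto
      then show "\<bar>r k x * (g k x \<bullet> \<phi> x)\<bar> \<le> \<eta>/2 * ((norm (g k x))\<^sup>2 + (norm (\<phi> x))\<^sup>2)"
        by (simp add: algebra_simps)
    qed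
    also have "\<dots> = \<eta>/2 * ((\<integral>x. (norm (g k x))\<^sup>2 \<partial>M) + I)"
      using square_integrableD(2)[OF g] square_integrableD(2)[OF \<phi>] by (simp add: I_def)
    also have "\<dots> \<le> \<eta>/2 * (B + I)"
      using elim(2) \<open>\<eta> > 0\<close> by (intro mult_left_mono) auto
    finally show ?case
      using \<eta>_bound by (simp add: dist_real_def)
  qed
qed

(* Young's inequality gives w g\<bullet>\<phi> \<le> w |g|^2/2 + w |\<phi>|^2/2, so in the limit X \<le> C/2 + X/2. *)

lemma weak_limit_weighted_norm_le:
  fixes w :: "nat \<Rightarrow> 'b \<Rightarrow> real"
  assumes w: "\<And>k. w k \<in> borel_measurable M"
    and w_bounds: "\<And>k x. x \<in> space M \<Longrightarrow> 0 \<le> w k x \<and> w k x \<le> B"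
    and g: "\<And>k. square_integrable M (g k)"
    and energy: "\<And>k. (\<integral>x. w k x * (norm (g k x))\<^sup>2 \<partial>M) \<le> C"
    and \<phi>: "square_integrable M \<phi>"
    and lim_inner: "(\<lambda>k. \<integral>x. w k x * (g k x \<bullet> \<phi> x) \<partial>M) \<longlonglongrightarrow> X"
    and lim_norm: "(\<lambda>k. \<integral>x. w k x * (norm (\<phi> x))\<^sup>2 \<partial>M) \<longlonglongrightarrow> X"
  shows "X \<le> C"
proof -
  have "(\<integral>x. w k x * (g k x \<bullet> \<phi> x) \<partial>M) \<le> C/2 + 1/2 * (\<integral>x. w k x * (norm (\<phi> x))\<^sup>2 \<partial>M)" for k
    using weighted_inner_Young[OF g[of k] \<phi> w[of k] w_bounds[where k=k], of 1] energy[of k] by (auto simp: abs_le_iff)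
  moreover have "(\<lambda>k. C/2 + 1/2 * (\<integral>x. w k x * (norm (\<phi> x))\<^sup>2 \<partial>M)) \<longlonglongrightarrow> C/2 + 1/2 * X"
    by (intro tendsto_intros lim_norm)
  ultimately have "X \<le> C/2 + 1/2 * X"
    using LIMSEQ_le[OF lim_inner] by blast
  then show ?thesis by simp
qed

lemma weak_convergence_by_approximation:
  assumes fs: "\<And>k. square_integrable M (fs k)"
    and fs_bounded: "\<And>k. (\<integral>x. (norm (fs k x))\<^sup>2 \<partial>M) \<le> K"
    and f: "square_integrable M f" and \<gamma>: "square_integrable M \<gamma>"
    and \<phi>: "\<And>j. square_integrable M (\<phi> j)"
    and approx: "(\<lambda>j. \<integral>x. (norm (\<gamma> x - \<phi> j x))\<^sup>2 \<partial>M) \<longlonglongrightarrow> 0"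
    and weak: "\<And>j. (\<lambda>k. \<integral>x. fs k x \<bullet> \<phi> j x \<partial>M) \<longlonglongrightarrow> (\<integral>x. f x \<bullet> \<phi> j x \<partial>M)"
  shows "(\<lambda>k. \<integral>x. fs k x \<bullet> \<gamma> x \<partial>M) \<longlonglongrightarrow> (\<integral>x. f x \<bullet> \<gamma> x \<partial>M)"
proof (rule tendstoI)
  fix e :: real assume "e > 0"
  define K' where "K' = (\<integral>x. (norm (f x))\<^sup>2 \<partial>M)"
  define t where "t = e / (4 * (\<bar>K\<bar> + \<bar>K'\<bar> + 1))"
  have "t > 0"
    using \<open>e > 0\<close> by (simp add: t_def add_pos_nonneg)
  have "t/2 * K + t/2 * K' = t * ((K + K')/2)"
    by (simp add: algebra_simps)
  also have "\<dots> < t * (\<bar>K\<bar> + \<bar>K'\<bar> + 1)"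
    using \<open>t > 0\<close> abs_ge_self[of K] abs_ge_self[of K'] by (intro mult_strict_left_mono) auto
  also have "\<dots> = e/4"
    unfolding t_def by (simp add: field_simps add_pos_nonneg)
  finally have t_bound: "t/2 * K + t/2 * K' < e/4" .
  obtain j where j: "(\<integral>x. (norm (\<gamma> x - \<phi> j x))\<^sup>2 \<partial>M) < t * e / 4"
  proof -
    have "t * e / 4 > 0"
      using \<open>t > 0\<close> \<open>e > 0\<close> by simp
    from order_tendstoD(2)[OF approx this] show ?thesis
      using that unfolding eventually_sequentially by blast
  qed
  define \<rho> where "\<rho> x = \<gamma> x - \<phi> j x" for x
  have \<rho>: "square_integrable M \<rho>"
    unfolding \<rho>_def by (rule square_integrable_diff[OF \<gamma> \<phi>])
  have remainder: "\<bar>\<integral>x. h x \<bullet> \<rho> x \<partial>M\<bar> \<le> t/2 * H + e/8"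
    if h: "square_integrable M h" and H: "(\<integral>x. (norm (h x))\<^sup>2 \<partial>M) \<le> H" for h H
  proof -
    have "\<bar>\<integral>x. h x \<bullet> \<rho> x \<partial>M\<bar>
        \<le> t/2 * (\<integral>x. (norm (h x))\<^sup>2 \<partial>M) + 1/(2*t) * (\<integral>x. (norm (\<rho> x))\<^sup>2 \<partial>M)"
      using weighted_inner_Young[OF h \<rho>, of "\<lambda>_. 1" 1 t] \<open>t > 0\<close> by simp
    also have "\<dots> \<le> t/2 * H + 1/(2*t) * (t * e / 4)"
      using H j \<open>t > 0\<close> unfolding \<rho>_def by (intro add_mono mult_left_mono) auto
    finally show ?thesis
      using \<open>t > 0\<close> by simp
  qed
  have split: "(\<integral>x. h x \<bullet> \<gamma> x \<partial>M) = (\<integral>x. h x \<bullet> \<phi> j x \<partial>M) + (\<integral>x. h x \<bullet> \<rho> x \<partial>M)"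
    if "square_integrable M h" for h
    using integrable_inner[OF that \<gamma>] integrable_inner[OF that \<phi>]
    by (simp add: \<rho>_def inner_diff_right)
  show "eventually (\<lambda>k. dist (\<integral>x. fs k x \<bullet> \<gamma> x \<partial>M) (\<integral>x. f x \<bullet> \<gamma> x \<partial>M) < e) sequentially"
    using tendstoD[OF weak[of j] half_gt_zero[OF \<open>e > 0\<close>]]
  proof eventually_elim
    case (elim k)
    have "\<bar>\<integral>x. fs k x \<bullet> \<rho> x \<partial>M\<bar> \<le> t/2 * K + e/8"
      by (rule remainder[OF fs fs_bounded])
    moreover have "\<bar>\<integral>x. f x \<bullet> \<rho> x \<partial>M\<bar> \<le> t/2 * K' + e/8"
      by (rule remainder[OF f]) (simp add: K'_def)
    ultimately show ?case
      using elim t_bound unfolding split[OF fs] split[OF f] dist_real_def by linarith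
  qed
qed

lemma square_integral_indicator_complement_tendsto_zero:
  fixes \<gamma> :: "'b \<Rightarrow> 'c::euclidean_space"
  assumes \<gamma>: "square_integrable M \<gamma>" and S [measurable]: "\<And>j. S j \<in> sets M"
    and eventually_in: "\<And>x. x \<in> space M \<Longrightarrow> \<gamma> x \<noteq> 0 \<Longrightarrow> eventually (\<lambda>j. x \<in> S j) sequentially"
  shows "(\<lambda>j. \<integral>x. (norm (\<gamma> x - indicator (S j) x *\<^sub>R \<gamma> x))\<^sup>2 \<partial>M) \<longlonglongrightarrow> 0"
proof -
  note [measurable] = square_integrableD(1)[OF \<gamma>]
  have "(\<lambda>j. \<integral>x. (norm (\<gamma> x - indicator (S j) x *\<^sub>R \<gamma> x))\<^sup>2 \<partial>M) \<longlonglongrightarrow> (\<integral>x. 0 \<partial>M)"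
  proof (rule integral_dominated_convergence[where w = "\<lambda>x. (norm (\<gamma> x))\<^sup>2"])
    show "integrable M (\<lambda>x. (norm (\<gamma> x))\<^sup>2)"
      by (rule square_integrableD(2)[OF \<gamma>])
    show "AE x in M. (\<lambda>j. (norm (\<gamma> x - indicator (S j) x *\<^sub>R \<gamma> x))\<^sup>2) \<longlonglongrightarrow> 0"
    proof (rule AE_I2)
      fix x assume x: "x \<in> space M"
      show "(\<lambda>j. (norm (\<gamma> x - indicator (S j) x *\<^sub>R \<gamma> x))\<^sup>2) \<longlonglongrightarrow> 0"
      proof (cases "\<gamma> x = 0")
        case False
        have "eventually (\<lambda>j. (norm (\<gamma> x - indicator (S j) x *\<^sub>R \<gamma> x))\<^sup>2 = 0) sequentially"
          using eventually_in[OF x False] by eventually_elim simp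
        then show ?thesis
          by (rule tendsto_eventually)
      qed simp
    qed
    show "AE x in M. norm ((norm (\<gamma> x - indicator (S j) x *\<^sub>R \<gamma> x))\<^sup>2) \<le> (norm (\<gamma> x))\<^sup>2" for j
      by (rule AE_I2) (simp add: indicator_def)
  qed measurable
  then show ?thesis
    by simp
qed

lemma sets_lebesgue_onI: "S \<in> sets lebesgue \<Longrightarrow> A \<in> sets lebesgue \<Longrightarrow> A \<subseteq> S \<Longrightarrow> A \<in> sets (lebesgue_on S)"
  by (simp add: sets_restrict_space_iff)

lemma lebesgue_on_vanishing_outside:
  fixes f :: "'a::euclidean_space \<Rightarrow> 'b::{banach, second_countable_topology}"
  assumes S: "S \<in> sets lebesgue" and vanish: "\<And>x. x \<notin> S \<Longrightarrow> f x = 0"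
  shows "f \<in> borel_measurable (lebesgue_on S) \<longleftrightarrow> f \<in> borel_measurable lebesgue"
    and "integrable (lebesgue_on S) f \<longleftrightarrow> integrable lebesgue f"
    and "integral\<^sup>L (lebesgue_on S) f = integral\<^sup>L lebesgue f"
proof -
  have f_eq: "(\<lambda>x. indicator S x *\<^sub>R f x) = f"
    using vanish by (auto simp: fun_eq_iff indicator_def)
  show "f \<in> borel_measurable (lebesgue_on S) \<longleftrightarrow> f \<in> borel_measurable lebesgue"
    using borel_measurable_restrict_space_iff[of S lebesgue f] S by (simp add: f_eq)
  show "integrable (lebesgue_on S) f \<longleftrightarrow> integrable lebesgue f"
    using integrable_restrict_space[of S lebesgue f] S by (simp add: f_eq)
  show "integral\<^sup>L (lebesgue_on S) f = integral\<^sup>L lebesgue f"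
    using integral_restrict_space[of S lebesgue f] S by (simp add: f_eq)
qed

lemma L2_on_vanishing_outside:
  fixes f :: "'a::euclidean_space \<Rightarrow> 'c::euclidean_space"
  assumes "S \<in> sets lebesgue" and "\<And>x. x \<notin> S \<Longrightarrow> f x = 0"
  shows "L2_on S f \<longleftrightarrow> square_integrable lebesgue f"
  using lebesgue_on_vanishing_outside(1)[of S f] lebesgue_on_vanishing_outside(2)[of S "\<lambda>x. (norm (f x))\<^sup>2"] assms
  by (simp add: L2_on_def square_integrable_def)

lemma lebesgue_on_subset:
  fixes f :: "'a::euclidean_space \<Rightarrow> 'b::{banach, second_countable_topology}"
  assumes S: "S \<in> sets lebesgue" and A: "A \<in> sets lebesgue" "A \<subseteq> S"
  shows "f \<in> borel_measurable (lebesgue_on A)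
      \<longleftrightarrow> (\<lambda>x. indicator A x *\<^sub>R f x) \<in> borel_measurable (lebesgue_on S)"
    and "integrable (lebesgue_on A) f \<longleftrightarrow> integrable (lebesgue_on S) (\<lambda>x. indicator A x *\<^sub>R f x)"
    and "integral\<^sup>L (lebesgue_on A) f = integral\<^sup>L (lebesgue_on S) (\<lambda>x. indicator A x *\<^sub>R f x)"
proof -
  have "restrict_space (lebesgue_on S) A = restrict_space lebesgue (S \<inter> A)"
    using S A by (intro restrict_restrict_space) auto
  moreover have "S \<inter> A = A"
    using A by blast
  ultimately have restrict: "restrict_space (lebesgue_on S) A = lebesgue_on A"
    by simp
  have "A \<inter> space (lebesgue_on S) \<in> sets (lebesgue_on S)"
    using S A by (simp add: sets_restrict_space_iff Int_absorb2)
  then show "f \<in> borel_measurable (lebesgue_on A)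
      \<longleftrightarrow> (\<lambda>x. indicator A x *\<^sub>R f x) \<in> borel_measurable (lebesgue_on S)"
    and "integrable (lebesgue_on A) f \<longleftrightarrow> integrable (lebesgue_on S) (\<lambda>x. indicator A x *\<^sub>R f x)"
    and "integral\<^sup>L (lebesgue_on A) f = integral\<^sup>L (lebesgue_on S) (\<lambda>x. indicator A x *\<^sub>R f x)"
    using borel_measurable_restrict_space_iff[of A "lebesgue_on S" f]
      integrable_restrict_space[of A "lebesgue_on S" f] integral_restrict_space[of A "lebesgue_on S" f]
    by (simp_all add: restrict)
qed

lemma L2_on_indicator_iff:
  fixes f :: "'a::euclidean_space \<Rightarrow> 'c::euclidean_space"
  assumes "S \<in> sets lebesgue" "A \<in> sets lebesgue" "A \<subseteq> S"
  shows "L2_on A f \<longleftrightarrow> L2_on S (\<lambda>x. indicator A x *\<^sub>R f x)"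
proof -
  have "(\<lambda>x. (norm (indicator A x *\<^sub>R f x))\<^sup>2) = (\<lambda>x. indicator A x *\<^sub>R (norm (f x))\<^sup>2)"
    by (auto simp: fun_eq_iff indicator_def)
  then show ?thesis
    using lebesgue_on_subset(1)[OF assms, of f] lebesgue_on_subset(2)[OF assms, of "\<lambda>x. (norm (f x))\<^sup>2"]
    by (simp add: L2_on_def)
qed

lemma L2_on_subset:
  fixes f :: "'a::euclidean_space \<Rightarrow> 'c::euclidean_space"
  assumes "S \<in> sets lebesgue" "A \<in> sets lebesgue" "A \<subseteq> S" and f: "L2_on S f"
  shows "L2_on A f"
proof -
  have "A \<in> sets (lebesgue_on S)"
    using assms(1-3) by (rule sets_lebesgue_onI)
  then have "square_integrable (lebesgue_on S) (\<lambda>x. indicator A x *\<^sub>R f x)"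
    using f unfolding L2_on_iff_square_integrable
    by (intro square_integrable_scaleR[where B=1]) (auto simp: indicator_def)
  then show ?thesis
    using L2_on_indicator_iff[OF assms(1-3), of f] unfolding L2_on_iff_square_integrable by blast
qed

(* X stands for \<Omega>_T, Gs k for \<nabla>\<mu>_\<epsilon> with regularisation eps k of the mobility, and Q enumerates
   the cylinders U^m_k \<times> (0, t_m), on each of which Gs converges weakly to G. *)

locale degenerate_flux_limit =
  fixes X :: "'a::euclidean_space set"
    and m :: "real \<Rightarrow> real"
    and zs :: "nat \<Rightarrow> 'a \<Rightarrow> real" and z :: "'a \<Rightarrow> real"
    and Gs :: "nat \<Rightarrow> 'a \<Rightarrow> 'c::euclidean_space" and G :: "'a \<Rightarrow> 'c"
    and eps :: "nat \<Rightarrow> real" and C :: real and Q :: "nat \<Rightarrow> 'a set"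
  assumes open_X: "open X"
    and m_cont: "continuous_on {0..1} m"
    and m_nonneg: "\<And>s. s \<in> {0..1} \<Longrightarrow> 0 \<le> m s"
    and m_eq_0_iff: "\<And>s. s \<in> {0..1} \<Longrightarrow> m s = 0 \<longleftrightarrow> s = 0"
    and zs_cont: "\<And>k. continuous_on X (zs k)"
    and zs_range: "\<And>k p. p \<in> X \<Longrightarrow> zs k p \<in> {0..1}"
    and zs_lim: "uniform_limit X zs z sequentially"
    and Gs_L2: "\<And>k. L2_on X (Gs k)"
    and eps_nonneg: "\<And>k. 0 \<le> eps k"
    and energy: "\<And>k. (\<integral>p. (m (zs k p) + eps k) * (norm (Gs k p))\<^sup>2 \<partial>lebesgue_on X) \<le> C"
    and Q_sets: "\<And>n. Q n \<in> sets lebesgue"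
    and Gs_weak: "\<And>n. weak_L2_conv (Q n) Gs G"
    and Q_cover: "{p \<in> X. 0 < z p} \<subseteq> (\<Union>n. Q n)"
begin

abbreviation "L \<equiv> lebesgue_on X"

definition positivity_set :: "'a set" where
  "positivity_set = {p \<in> X. 0 < z p}"

definition m_max :: real where
  "m_max = Sup (m ` {0..1})"

lemma X_sets [simp]: "X \<in> sets lebesgue"
  using open_X by simp

lemma z_cont: "continuous_on X z"
  using zs_lim zs_cont by (intro uniform_limit_theorem) auto

lemma z_range: "p \<in> X \<Longrightarrow> z p \<in> {0..1}"
  using zs_range tendsto_uniform_limitI[OF zs_lim]
  by (metis closed_atLeastAtMost closed_sequentially)

lemma m_le_m_max: "s \<in> {0..1} \<Longrightarrow> m s \<le> m_max"
  unfolding m_max_def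
  by (intro cSup_upper imageI bounded_imp_bdd_above compact_imp_bounded compact_continuous_image m_cont)
     auto

lemma m_max_nonneg: "0 \<le> m_max"
  using m_nonneg[of 0] m_le_m_max[of 0] by simp

lemma mobility_bounds:
  assumes "p \<in> X"
  shows "0 \<le> m (zs k p) \<and> m (zs k p) \<le> m_max" and "0 \<le> m (z p) \<and> m (z p) \<le> m_max"
  using zs_range[OF assms] z_range[OF assms] m_nonneg m_le_m_max by auto

lemma mobility_difference_bounded: "p \<in> space L \<Longrightarrow> \<bar>m (zs k p) - m (z p)\<bar> \<le> m_max"
  using mobility_bounds(1)[of p k] mobility_bounds(2)[of p] by (auto simp: abs_le_iff)

lemma mobility_measurable [measurable]:
  "(\<lambda>p. m (zs k p)) \<in> borel_measurable L" "(\<lambda>p. m (z p)) \<in> borel_measurable L"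
  "z \<in> borel_measurable L"
proof -
  have "continuous_on X (\<lambda>p. m (zs k p))" "continuous_on X (\<lambda>p. m (z p))"
    using zs_range z_range by (auto intro!: continuous_on_compose2[OF m_cont] zs_cont z_cont)
  then show "(\<lambda>p. m (zs k p)) \<in> borel_measurable L" "(\<lambda>p. m (z p)) \<in> borel_measurable L"
    "z \<in> borel_measurable L"
    using z_cont by (auto intro: continuous_imp_measurable_on_sets_lebesgue)
qed

lemma Gs_square_integrable: "square_integrable L (Gs k)"
  using Gs_L2 by (simp add: L2_on_iff_square_integrable)

lemma Gs_measurable [measurable]: "Gs k \<in> borel_measurable L"
  using Gs_square_integrable by (rule square_integrableD)

lemma mobility_uniform_conv:
  assumes "\<eta> > 0"
  shows "eventually (\<lambda>k. \<forall>p\<in>X. \<bar>m (zs k p) - m (z p)\<bar> \<le> \<eta>) sequentially"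
proof -
  have "uniformly_continuous_on {0..1} m"
    by (rule compact_uniformly_continuous[OF m_cont]) simp
  then obtain d where "d > 0" and d: "\<forall>s\<in>{0..1}. \<forall>s'\<in>{0..1}. dist s' s < d \<longrightarrow> dist (m s') (m s) < \<eta>"
    using assms unfolding uniformly_continuous_on_def by blast
  show ?thesis
    using uniform_limitD[OF zs_lim \<open>d > 0\<close>]
  proof eventually_elim
    case (elim k)
    show ?case
    proof
      fix p assume "p \<in> X"
      then have "dist (m (zs k p)) (m (z p)) < \<eta>"
        using d zs_range z_range elim by blast
      then show "\<bar>m (zs k p) - m (z p)\<bar> \<le> \<eta>"
        by (simp add: dist_real_def)
    qed
  qed
qed

lemma weighted_energy_integrable: "integrable L (\<lambda>p. m (zs k p) * (norm (Gs k p))\<^sup>2)"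
  using integrable_weighted_inner[OF Gs_square_integrable Gs_square_integrable, of "\<lambda>p. m (zs k p)" m_max k]
    mobility_bounds by (force simp: power2_norm_eq_inner)

lemma weighted_energy_le: "(\<integral>p. m (zs k p) * (norm (Gs k p))\<^sup>2 \<partial>L) \<le> C"
proof -
  have "integrable L (\<lambda>p. (m (zs k p) + eps k) * (norm (Gs k p))\<^sup>2)"
    using weighted_energy_integrable square_integrableD(2)[OF Gs_square_integrable]
    by (simp add: distrib_right)
  then have "(\<integral>p. m (zs k p) * (norm (Gs k p))\<^sup>2 \<partial>L) \<le> (\<integral>p. (m (zs k p) + eps k) * (norm (Gs k p))\<^sup>2 \<partial>L)"
    using weighted_energy_integrable eps_nonneg by (intro integral_mono) (auto intro: mult_right_mono)
  also have "\<dots> \<le> C"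
    by (rule energy)
  finally show ?thesis .
qed

lemma flux_square_integrable: "square_integrable L (\<lambda>p. m (zs k p) *\<^sub>R Gs k p)"
  using mobility_bounds by (intro square_integrable_scaleR[OF Gs_square_integrable, where B=m_max]) force+

lemma flux_norm_le: "(\<integral>p. (norm (m (zs k p) *\<^sub>R Gs k p))\<^sup>2 \<partial>L) \<le> m_max * C"
proof -
  have "(\<integral>p. (norm (m (zs k p) *\<^sub>R Gs k p))\<^sup>2 \<partial>L) \<le> (\<integral>p. m_max * (m (zs k p) * (norm (Gs k p))\<^sup>2) \<partial>L)"
  proof (rule integral_mono)
    show "integrable L (\<lambda>p. (norm (m (zs k p) *\<^sub>R Gs k p))\<^sup>2)"
      using flux_square_integrable by (rule square_integrableD)
    show "integrable L (\<lambda>p. m_max * (m (zs k p) * (norm (Gs k p))\<^sup>2))"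
      using weighted_energy_integrable by simp
    fix p assume "p \<in> space L"
    then show "(norm (m (zs k p) *\<^sub>R Gs k p))\<^sup>2 \<le> m_max * (m (zs k p) * (norm (Gs k p))\<^sup>2)"
      using mobility_bounds(1)[of p k] by (intro power2_norm_scaleR_le) auto
  qed
  also have "\<dots> \<le> m_max * C"
    using weighted_energy_le m_max_nonneg by (simp add: mult_left_mono)
  finally show ?thesis .
qed

lemma positivity_set_open: "open positivity_set"
proof -
  have "open (X \<inter> z -` {0<..})"
    using continuous_open_preimage[OF z_cont open_X] by simp
  then show ?thesis
    by (simp add: positivity_set_def Int_def vimage_def)
qed

lemma positivity_set_sets [simp]: "positivity_set \<in> sets lebesgue"
  using positivity_set_open by simp

lemma positivity_set_subset: "positivity_set \<subseteq> X"
  by (auto simp: positivity_set_def)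

lemma mobility_small_off_positivity_set:
  assumes "\<eta> > 0"
  shows "eventually (\<lambda>k. \<forall>p\<in>X - positivity_set. m (zs k p) \<le> \<eta>) sequentially"
  using mobility_uniform_conv[OF assms]
proof eventually_elim
  case (elim k)
  show ?case
  proof
    fix p assume p: "p \<in> X - positivity_set"
    then have "m (z p) = 0"
      using z_range[of p] m_eq_0_iff by (auto simp: positivity_set_def)
    then show "m (zs k p) \<le> \<eta>"
      using elim p by fastforce
  qed
qed

lemma flux_square_integral_off_positivity_set_le:
  assumes "0 \<le> \<eta>" and small: "\<forall>p\<in>X - positivity_set. m (zs k p) \<le> \<eta>"
  shows "(\<integral>p. (norm (m (zs k p) *\<^sub>R Gs k p))\<^sup>2 \<partial>lebesgue_on (X - positivity_set)) \<le> \<eta> * C"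
proof -
  have sets: "X - positivity_set \<in> sets lebesgue" "X - positivity_set \<subseteq> X"
    by auto
  have "(\<integral>p. (norm (m (zs k p) *\<^sub>R Gs k p))\<^sup>2 \<partial>lebesgue_on (X - positivity_set))
      = (\<integral>p. indicator (X - positivity_set) p * (norm (m (zs k p) *\<^sub>R Gs k p))\<^sup>2 \<partial>L)"
    using lebesgue_on_subset(3)[OF X_sets sets, of "\<lambda>p. (norm (m (zs k p) *\<^sub>R Gs k p))\<^sup>2"] by simp
  also have "\<dots> \<le> (\<integral>p. \<eta> * (m (zs k p) * (norm (Gs k p))\<^sup>2) \<partial>L)"
  proof (rule order_trans[OF abs_ge_self integrable_abs_integral_le(2)])
    show "integrable L (\<lambda>p. \<eta> * (m (zs k p) * (norm (Gs k p))\<^sup>2))"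
      using weighted_energy_integrable by simp
    have "X - positivity_set \<in> sets L"
      using sets by (intro sets_lebesgue_onI) auto
    then show "(\<lambda>p. indicator (X - positivity_set) p * (norm (m (zs k p) *\<^sub>R Gs k p))\<^sup>2) \<in> borel_measurable L"
      by measurable
    fix p assume "p \<in> space L"
    then have "p \<in> X" by simp
    then show "\<bar>indicator (X - positivity_set) p * (norm (m (zs k p) *\<^sub>R Gs k p))\<^sup>2\<bar>
        \<le> \<eta> * (m (zs k p) * (norm (Gs k p))\<^sup>2)"
      using mobility_bounds(1)[of p k] small \<open>0 \<le> \<eta>\<close> power2_norm_scaleR_le[of "m (zs k p)" \<eta> "Gs k p"]
      by (auto simp: indicator_def)
  qed
  also have "\<dots> \<le> \<eta> * C"
    using weighted_energy_le \<open>0 \<le> \<eta>\<close> by (simp add: mult_left_mono)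
  finally show ?thesis .
qed

lemma flux_tendsto_zero_off_positivity_set:
  "strong_L2_conv (X - positivity_set) (\<lambda>k p. m (zs k p) *\<^sub>R Gs k p) (\<lambda>p. 0)"
  unfolding strong_L2_conv_def
proof (intro conjI allI)
  show "L2_on (X - positivity_set) (\<lambda>p. m (zs k p) *\<^sub>R Gs k p)" for k
  proof (rule L2_on_subset[OF X_sets])
    show "L2_on X (\<lambda>p. m (zs k p) *\<^sub>R Gs k p)"
      using flux_square_integrable by (simp add: L2_on_iff_square_integrable)
  qed auto
  show "L2_on (X - positivity_set) (\<lambda>p. 0)"
    by (simp add: L2_on_def)
  show "(\<lambda>k. \<integral>p. (norm (m (zs k p) *\<^sub>R Gs k p - 0))\<^sup>2 \<partial>lebesgue_on (X - positivity_set)) \<longlonglongrightarrow> 0"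
  proof (rule tendstoI)
    fix e :: real assume "e > 0"
    define \<eta> where "\<eta> = e / (\<bar>C\<bar> + 1)"
    have "\<eta> > 0"
      using \<open>e > 0\<close> by (simp add: \<eta>_def add_pos_nonneg)
    have "\<eta> * C < \<eta> * (\<bar>C\<bar> + 1)"
      using \<open>\<eta> > 0\<close> abs_ge_self[of C] by (intro mult_strict_left_mono) auto
    then have "\<eta> * C < e"
      by (simp add: \<eta>_def add_pos_nonneg)
    show "eventually (\<lambda>k. dist (\<integral>p. (norm (m (zs k p) *\<^sub>R Gs k p - 0))\<^sup>2 \<partial>lebesgue_on (X - positivity_set)) 0 < e) sequentially"
      using mobility_small_off_positivity_set[OF \<open>\<eta> > 0\<close>]
    proof eventually_elim
      case (elim k)
      have "0 \<le> (\<integral>p. (norm (m (zs k p) *\<^sub>R Gs k p))\<^sup>2 \<partial>lebesgue_on (X - positivity_set))"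
        by (intro Bochner_Integration.integral_nonneg) simp
      then show ?case
        using flux_square_integral_off_positivity_set_le[OF less_imp_le[OF \<open>\<eta> > 0\<close>] elim] \<open>\<eta> * C < e\<close>
        by (simp add: dist_real_def)
    qed
  qed
qed

definition piece :: "nat \<Rightarrow> 'a set" where
  "piece n = positivity_set \<inter> Q n"

lemma piece_sets [simp]: "piece n \<in> sets lebesgue"
  unfolding piece_def by (intro sets.Int positivity_set_sets Q_sets)

lemma piece_subset: "piece n \<subseteq> positivity_set"
  by (simp add: piece_def)

lemma Union_piece: "(\<Union>n. piece n) = positivity_set"
  using Q_cover by (auto simp: piece_def positivity_set_def)

lemma G_L2_on_Q: "L2_on (Q n) G"
  using Gs_weak[of n] by (simp add: weak_L2_conv_def)

lemma G_L2_on_piece: "L2_on (piece n) G"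
  by (rule L2_on_subset[OF Q_sets[of n] piece_sets _ G_L2_on_Q[of n]]) (simp add: piece_def)

lemma square_integrable_indicator_G:
  assumes "S \<in> sets lebesgue" "S \<subseteq> (\<Union>i<n. piece i)"
  shows "square_integrable L (\<lambda>p. indicator S p *\<^sub>R G p)"
  using assms
proof (induction n arbitrary: S)
  case 0
  then show ?case by simp
next
  case (Suc n)
  have "S - piece n \<subseteq> (\<Union>i<n. piece i)"
    using Suc.prems(2) by (auto simp: lessThan_Suc)
  then have outside: "square_integrable L (\<lambda>p. indicator (S - piece n) p *\<^sub>R G p)"
    by (rule Suc.IH[OF sets.Diff[OF Suc.prems(1) piece_sets]])
  have S_piece: "S \<inter> piece n \<in> sets lebesgue" "S \<inter> piece n \<subseteq> X"
    using Suc.prems(1) piece_subset positivity_set_subset by auto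
  have "L2_on (S \<inter> piece n) G"
    by (rule L2_on_subset[OF piece_sets[of n] S_piece(1) _ G_L2_on_piece[of n]]) simp
  then have inside: "square_integrable L (\<lambda>p. indicator (S \<inter> piece n) p *\<^sub>R G p)"
    using L2_on_indicator_iff[OF X_sets S_piece, of G] unfolding L2_on_iff_square_integrable by blast
  have "(\<lambda>p. indicator S p *\<^sub>R G p)
      = (\<lambda>p. indicator (S \<inter> piece n) p *\<^sub>R G p + indicator (S - piece n) p *\<^sub>R G p)"
    by (auto simp: fun_eq_iff indicator_def)
  then show ?case
    using square_integrable_add[OF inside outside] by simp
qed

lemma G_measurable_positivity_set [measurable]: "G \<in> borel_measurable (lebesgue_on positivity_set)"
proof (rule measurable_piecewise_restrict[where C = "range piece"])
  show "S \<inter> space (lebesgue_on positivity_set) \<in> sets (lebesgue_on positivity_set)" if "S \<in> range piece" for S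
    using that piece_subset by (auto simp: sets_restrict_space_iff)
  show "space (lebesgue_on positivity_set) \<subseteq> \<Union> (range piece)"
    using Union_piece by simp
  show "G \<in> restrict_space (lebesgue_on positivity_set) S \<rightarrow>\<^sub>M borel" if "S \<in> range piece" for S
  proof -
    obtain n where S: "S = piece n"
      using \<open>S \<in> range piece\<close> by blast
    have "restrict_space (lebesgue_on positivity_set) (piece n) = lebesgue_on (piece n)"
      using piece_subset[of n] by (subst restrict_restrict_space) (auto simp: Int_absorb1)
    then show ?thesis
      using G_L2_on_piece[of n] by (simp add: S L2_on_def)
  qed
qed simp

lemma mobility_measurable_positivity_set [measurable]:
  "(\<lambda>p. m (z p)) \<in> borel_measurable (lebesgue_on positivity_set)"
  using mobility_measurable(2) positivity_set_subset
  by (measurable; auto intro: measurable_restrict_space3)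

lemma Gs_weak_on_piece:
  assumes \<phi>: "square_integrable L \<phi>" and vanish: "\<And>p. p \<notin> piece n \<Longrightarrow> \<phi> p = 0"
  shows "integrable L (\<lambda>p. G p \<bullet> \<phi> p)"
    and "(\<lambda>k. \<integral>p. Gs k p \<bullet> \<phi> p \<partial>L) \<longlonglongrightarrow> (\<integral>p. G p \<bullet> \<phi> p \<partial>L)"
proof -
  have off_X: "\<And>p. p \<notin> X \<Longrightarrow> \<phi> p = 0" and off_Q: "\<And>p. p \<notin> Q n \<Longrightarrow> \<phi> p = 0"
    using vanish piece_subset positivity_set_subset by (auto simp: piece_def)
  have "L2_on (Q n) \<phi>"
    using \<phi> L2_on_vanishing_outside[OF X_sets off_X] L2_on_vanishing_outside[OF Q_sets off_Q]
    by (simp add: L2_on_iff_square_integrable)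
  then have "(\<lambda>k. \<integral>p. Gs k p \<bullet> \<phi> p \<partial>lebesgue_on (Q n)) \<longlonglongrightarrow> (\<integral>p. G p \<bullet> \<phi> p \<partial>lebesgue_on (Q n))"
    and "integrable (lebesgue_on (Q n)) (\<lambda>p. G p \<bullet> \<phi> p)"
    using Gs_weak[of n] integrable_inner[of "lebesgue_on (Q n)" G \<phi>] G_L2_on_Q
    unfolding weak_L2_conv_def L2_on_iff_square_integrable by blast+
  moreover have "integrable L (\<lambda>p. H p \<bullet> \<phi> p) \<longleftrightarrow> integrable (lebesgue_on (Q n)) (\<lambda>p. H p \<bullet> \<phi> p)"
    and "(\<integral>p. H p \<bullet> \<phi> p \<partial>L) = (\<integral>p. H p \<bullet> \<phi> p \<partial>lebesgue_on (Q n))" for H :: "'a \<Rightarrow> 'c"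
    using lebesgue_on_vanishing_outside(2,3)[OF X_sets, of "\<lambda>p. H p \<bullet> \<phi> p"]
      lebesgue_on_vanishing_outside(2,3)[OF Q_sets[of n], of "\<lambda>p. H p \<bullet> \<phi> p"] off_X off_Q
    by auto
  ultimately show "integrable L (\<lambda>p. G p \<bullet> \<phi> p)"
    and "(\<lambda>k. \<integral>p. Gs k p \<bullet> \<phi> p \<partial>L) \<longlonglongrightarrow> (\<integral>p. G p \<bullet> \<phi> p \<partial>L)"
    by simp_all
qed

lemma Gs_weak_on_finite_union:
  assumes "square_integrable L \<phi>" and "\<And>p. p \<notin> (\<Union>i<n. piece i) \<Longrightarrow> \<phi> p = 0"
  shows "integrable L (\<lambda>p. G p \<bullet> \<phi> p) \<and> (\<lambda>k. \<integral>p. Gs k p \<bullet> \<phi> p \<partial>L) \<longlonglongrightarrow> (\<integral>p. G p \<bullet> \<phi> p \<partial>L)"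
  using assms
proof (induction n arbitrary: \<phi>)
  case 0
  then have "\<phi> = (\<lambda>_. 0)" by auto
  then show ?case by simp
next
  case (Suc n)
  define \<phi>\<^sub>1 where "\<phi>\<^sub>1 p = indicator (piece n) p *\<^sub>R \<phi> p" for p
  define \<phi>\<^sub>2 where "\<phi>\<^sub>2 p = \<phi> p - \<phi>\<^sub>1 p" for p
  have "piece n \<in> sets L"
    using piece_subset positivity_set_subset by (intro sets_lebesgue_onI) auto
  then have sq1: "square_integrable L \<phi>\<^sub>1"
    unfolding \<phi>\<^sub>1_def
    by (auto intro!: square_integrable_scaleR[OF Suc.prems(1), where B=1] simp: indicator_def)
  have sq2: "square_integrable L \<phi>\<^sub>2"
    using square_integrable_diff[OF Suc.prems(1) sq1] by (simp add: \<phi>\<^sub>2_def[abs_def])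
  have "\<phi>\<^sub>1 p = 0" if "p \<notin> piece n" for p
    using that by (simp add: \<phi>\<^sub>1_def)
  note first = Gs_weak_on_piece[OF sq1 this]
  have "\<phi>\<^sub>2 p = 0" if "p \<notin> (\<Union>i<n. piece i)" for p
    using Suc.prems(2)[of p] that by (auto simp: \<phi>\<^sub>1_def \<phi>\<^sub>2_def lessThan_Suc indicator_def)
  then have second: "integrable L (\<lambda>p. G p \<bullet> \<phi>\<^sub>2 p)"
    "(\<lambda>k. \<integral>p. Gs k p \<bullet> \<phi>\<^sub>2 p \<partial>L) \<longlonglongrightarrow> (\<integral>p. G p \<bullet> \<phi>\<^sub>2 p \<partial>L)"
    using Suc.IH[OF sq2] by blast+
  have split: "\<phi> p = \<phi>\<^sub>1 p + \<phi>\<^sub>2 p" for p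
    by (simp add: \<phi>\<^sub>2_def)
  have integral_split: "(\<integral>p. H p \<bullet> \<phi> p \<partial>L) = (\<integral>p. H p \<bullet> \<phi>\<^sub>1 p \<partial>L) + (\<integral>p. H p \<bullet> \<phi>\<^sub>2 p \<partial>L)"
    if "integrable L (\<lambda>p. H p \<bullet> \<phi>\<^sub>1 p)" "integrable L (\<lambda>p. H p \<bullet> \<phi>\<^sub>2 p)" for H :: "'a \<Rightarrow> 'c"
    using that by (simp add: split inner_add_right)
  show ?case
  proof
    show "integrable L (\<lambda>p. G p \<bullet> \<phi> p)"
      using first(1) second(1) by (simp add: split inner_add_right)
    show "(\<lambda>k. \<integral>p. Gs k p \<bullet> \<phi> p \<partial>L) \<longlonglongrightarrow> (\<integral>p. G p \<bullet> \<phi> p \<partial>L)"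
      using tendsto_add[OF first(2) second(2)] integral_split[OF first(1) second(1)]
        integral_split[OF integrable_inner[OF Gs_square_integrable sq1] integrable_inner[OF Gs_square_integrable sq2]]
      by simp
  qed
qed

definition level :: "real \<Rightarrow> 'a set" where
  "level \<delta> = {p \<in> X. \<delta> \<le> z p}"

lemma level_sets [simp]: "level \<delta> \<in> sets lebesgue"
proof -
  have "open (X \<inter> z -` {..<\<delta>})"
    using continuous_open_preimage[OF z_cont open_X] by simp
  then have "X - (X \<inter> z -` {..<\<delta>}) \<in> sets lebesgue"
    by (intro sets.Diff) auto
  moreover have "level \<delta> = X - (X \<inter> z -` {..<\<delta>})"
    by (auto simp: level_def)
  ultimately show ?thesis by simp
qed

lemma level_sets_L [simp]: "level \<delta> \<in> sets L"
  by (rule sets_lebesgue_onI[OF X_sets level_sets]) (auto simp: level_def)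

lemma Gs_on_level_square_integrable: "square_integrable L (\<lambda>p. indicator (level \<delta>) p *\<^sub>R Gs k p)"
  by (rule square_integrable_scaleR[OF Gs_square_integrable borel_measurable_indicator[OF level_sets_L], where B=1])
     (auto simp: indicator_def)

lemma mobility_lower_bound_on_level:
  assumes "\<delta> > 0"
  obtains c where "c > 0" "eventually (\<lambda>k. \<forall>p\<in>level \<delta>. c \<le> m (zs k p)) sequentially"
proof -
  define a where "a = min (\<delta>/2) 1"
  have a: "0 < a" "a \<le> 1" "a \<le> \<delta>/2"
    using assms by (auto simp: a_def)
  have "{a..1} \<noteq> {}" "continuous_on {a..1} m"
    using a by (auto intro: continuous_on_subset[OF m_cont])
  then obtain s\<^sub>0 where s\<^sub>0: "s\<^sub>0 \<in> {a..1}" "\<And>s. s \<in> {a..1} \<Longrightarrow> m s\<^sub>0 \<le> m s"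
    using continuous_attains_inf[OF compact_Icc] by blast
  have "s\<^sub>0 \<in> {0..1}" "s\<^sub>0 \<noteq> 0"
    using s\<^sub>0(1) a by auto
  then have "m s\<^sub>0 > 0"
    using m_nonneg m_eq_0_iff by (simp add: less_le)
  moreover have "eventually (\<lambda>k. \<forall>p\<in>level \<delta>. m s\<^sub>0 \<le> m (zs k p)) sequentially"
    using uniform_limitD[OF zs_lim half_gt_zero[OF assms]]
  proof eventually_elim
    case (elim k)
    show ?case
    proof
      fix p assume "p \<in> level \<delta>"
      then have p: "p \<in> X" "\<delta> \<le> z p"
        by (auto simp: level_def)
      then have "\<bar>zs k p - z p\<bar> < \<delta>/2"
        using elim by (simp add: dist_real_def)
      then have "a \<le> zs k p"
        using p(2) a(3) unfolding abs_less_iff by linarith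
      then have "zs k p \<in> {a..1}"
        using zs_range[OF p(1)] by simp
      then show "m s\<^sub>0 \<le> m (zs k p)"
        by (rule s\<^sub>0(2))
    qed
  qed
  ultimately show ?thesis
    using that by blast
qed

lemma Gs_bounded_on_level:
  assumes "\<delta> > 0"
  obtains B where "eventually (\<lambda>k. (\<integral>p. (norm (indicator (level \<delta>) p *\<^sub>R Gs k p))\<^sup>2 \<partial>L) \<le> B) sequentially"
proof -
  obtain c where "c > 0" and c: "eventually (\<lambda>k. \<forall>p\<in>level \<delta>. c \<le> m (zs k p)) sequentially"
    using mobility_lower_bound_on_level[OF assms] .
  have "eventually (\<lambda>k. (\<integral>p. (norm (indicator (level \<delta>) p *\<^sub>R Gs k p))\<^sup>2 \<partial>L) \<le> C / c) sequentially"
    using c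
  proof eventually_elim
    case (elim k)
    have "(\<integral>p. (norm (indicator (level \<delta>) p *\<^sub>R Gs k p))\<^sup>2 \<partial>L) \<le> (\<integral>p. 1/c * (m (zs k p) * (norm (Gs k p))\<^sup>2) \<partial>L)"
    proof (rule integral_mono)
      show "integrable L (\<lambda>p. (norm (indicator (level \<delta>) p *\<^sub>R Gs k p))\<^sup>2)"
        using Gs_on_level_square_integrable by (rule square_integrableD)
      show "integrable L (\<lambda>p. 1/c * (m (zs k p) * (norm (Gs k p))\<^sup>2))"
        using weighted_energy_integrable by simp
      fix p assume "p \<in> space L"
      then have "0 \<le> m (zs k p)"
        using mobility_bounds by simp
      moreover have "1 \<le> 1/c * m (zs k p)" if "p \<in> level \<delta>"
        using elim that \<open>c > 0\<close> by (simp add: field_simps)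
      ultimately show "(norm (indicator (level \<delta>) p *\<^sub>R Gs k p))\<^sup>2 \<le> 1/c * (m (zs k p) * (norm (Gs k p))\<^sup>2)"
        using \<open>c > 0\<close> mult_right_mono[of 1 "1/c * m (zs k p)" "(norm (Gs k p))\<^sup>2"]
        by (auto simp: indicator_def)
    qed
    also have "\<dots> \<le> C / c"
      using weighted_energy_le[of k] \<open>c > 0\<close> by (simp add: divide_right_mono)
    finally show ?case .
  qed
  then show ?thesis
    using that by blast
qed

definition exhaustion :: "nat \<Rightarrow> 'a set" where
  "exhaustion j = (\<Union>i<j. piece i) \<inter> level (1 / Suc j)"

lemma exhaustion_sets [simp]: "exhaustion j \<in> sets lebesgue"
  unfolding exhaustion_def by (intro sets.Int sets.finite_UN) auto

lemma exhaustion_subset: "exhaustion j \<subseteq> positivity_set"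
  using piece_subset by (auto simp: exhaustion_def)

lemma exhaustion_mono: "exhaustion j \<subseteq> exhaustion (Suc j)"
proof -
  have "1 / real (Suc (Suc j)) \<le> 1 / real (Suc j)"
    by (simp add: frac_le)
  then have "level (1 / Suc j) \<subseteq> level (1 / Suc (Suc j))"
    by (auto simp: level_def)
  then show ?thesis
    by (auto simp: exhaustion_def lessThan_Suc)
qed

lemma eventually_in_exhaustion:
  assumes "p \<in> positivity_set"
  shows "eventually (\<lambda>j. p \<in> exhaustion j) sequentially"
proof -
  obtain i where i: "p \<in> piece i"
    using assms Union_piece by blast
  obtain J where "J > 0" and J: "inverse (real J) < z p"
    using ex_inverse_of_nat_less assms by (auto simp: positivity_set_def)
  show ?thesis
  proof (rule eventually_sequentiallyI[of "max J (Suc i)"])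
    fix j assume j: "max J (Suc i) \<le> j"
    then have "1 / real (Suc j) \<le> inverse (real J)"
      using \<open>J > 0\<close> by (simp add: inverse_eq_divide frac_le)
    then show "p \<in> exhaustion j"
      using i j J assms by (auto simp: exhaustion_def level_def positivity_set_def)
  qed
qed

(* Writing m(z_k) = m(z) + r_k, the m(z) part converges by weak convergence of Gs on the pieces,
   and the r_k part vanishes since r_k \<rightarrow> 0 uniformly while Gs stays L^2-bounded on level sets. *)

lemma flux_weak_on_exhaustion:
  assumes \<phi>: "square_integrable L \<phi>" and vanish: "\<And>p. p \<notin> exhaustion j \<Longrightarrow> \<phi> p = 0"
  shows "integrable L (\<lambda>p. m (z p) * (G p \<bullet> \<phi> p))"
    and "(\<lambda>k. \<integral>p. m (zs k p) * (Gs k p \<bullet> \<phi> p) \<partial>L) \<longlonglongrightarrow> (\<integral>p. m (z p) * (G p \<bullet> \<phi> p) \<partial>L)"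
proof -
  define \<delta> where "\<delta> = 1 / real (Suc j)"
  define \<psi> where "\<psi> p = m (z p) *\<^sub>R \<phi> p" for p
  define r where "r k p = m (zs k p) - m (z p)" for k p
  define H where "H k p = indicator (level \<delta>) p *\<^sub>R Gs k p" for k p
  have \<psi>: "square_integrable L \<psi>"
    unfolding \<psi>_def using mobility_bounds by (intro square_integrable_scaleR[OF \<phi>, where B=m_max]) force+
  have "\<psi> p = 0" if "p \<notin> (\<Union>i<j. piece i)" for p
    using vanish[of p] that by (auto simp: \<psi>_def exhaustion_def)
  then have weak: "integrable L (\<lambda>p. G p \<bullet> \<psi> p)"
    "(\<lambda>k. \<integral>p. Gs k p \<bullet> \<psi> p \<partial>L) \<longlonglongrightarrow> (\<integral>p. G p \<bullet> \<psi> p \<partial>L)"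
    using Gs_weak_on_finite_union[OF \<psi>] by blast+
  then show "integrable L (\<lambda>p. m (z p) * (G p \<bullet> \<phi> p))"
    by (simp add: \<psi>_def)
  have H: "square_integrable L (H k)" for k
    unfolding H_def by (rule Gs_on_level_square_integrable)
  obtain B where "eventually (\<lambda>k. (\<integral>p. (norm (H k p))\<^sup>2 \<partial>L) \<le> B) sequentially"
    using Gs_bounded_on_level[of \<delta>] by (auto simp: H_def \<delta>_def)
  moreover have "eventually (\<lambda>k. \<forall>p\<in>space L. \<bar>r k p\<bar> \<le> \<eta>) sequentially" if "\<eta> > 0" for \<eta>
    using mobility_uniform_conv[OF that] by (simp add: r_def)
  ultimately have remainder: "(\<lambda>k. \<integral>p. r k p * (H k p \<bullet> \<phi> p) \<partial>L) \<longlonglongrightarrow> 0"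
    by (intro weighted_inner_tendsto_zero[OF _ _ H _ \<phi>]) (auto simp: r_def)
  have r_bounded: "\<bar>r k p\<bar> \<le> m_max" if "p \<in> space L" for k p
    unfolding r_def using that by (rule mobility_difference_bounded)
  have "m (zs k p) * (Gs k p \<bullet> \<phi> p) = Gs k p \<bullet> \<psi> p + r k p * (H k p \<bullet> \<phi> p)" for k p
    using vanish[of p] by (cases "p \<in> level \<delta>") (auto simp: \<psi>_def r_def H_def exhaustion_def \<delta>_def algebra_simps)
  then have "(\<integral>p. m (zs k p) * (Gs k p \<bullet> \<phi> p) \<partial>L) = (\<integral>p. Gs k p \<bullet> \<psi> p \<partial>L) + (\<integral>p. r k p * (H k p \<bullet> \<phi> p) \<partial>L)" for k
    using integrable_inner[OF Gs_square_integrable \<psi>] integrable_weighted_inner[OF H \<phi> _ r_bounded]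
    by (simp add: r_def)
  moreover have "(\<integral>p. G p \<bullet> \<psi> p \<partial>L) = (\<integral>p. m (z p) * (G p \<bullet> \<phi> p) \<partial>L)"
    by (simp add: \<psi>_def)
  ultimately show "(\<lambda>k. \<integral>p. m (zs k p) * (Gs k p \<bullet> \<phi> p) \<partial>L) \<longlonglongrightarrow> (\<integral>p. m (z p) * (G p \<bullet> \<phi> p) \<partial>L)"
    using tendsto_add[OF weak(2) remainder] by simp
qed

lemma limit_energy_on_exhaustion:
  "(\<integral>p. m (z p) * (norm (indicator (exhaustion j) p *\<^sub>R G p))\<^sup>2 \<partial>L) \<le> C"
proof -
  define \<phi> where "\<phi> p = indicator (exhaustion j) p *\<^sub>R G p" for p
  have \<phi>: "square_integrable L \<phi>"
    unfolding \<phi>_def by (rule square_integrable_indicator_G[OF exhaustion_sets]) (auto simp: exhaustion_def)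
  have vanish: "\<phi> p = 0" if "p \<notin> exhaustion j" for p
    using that by (simp add: \<phi>_def)
  have remainder: "(\<lambda>k. \<integral>p. (m (zs k p) - m (z p)) * (\<phi> p \<bullet> \<phi> p) \<partial>L) \<longlonglongrightarrow> 0"
  proof (rule weighted_inner_tendsto_zero[OF _ _ \<phi> _ \<phi>])
    show "eventually (\<lambda>k. \<forall>p\<in>space L. \<bar>m (zs k p) - m (z p)\<bar> \<le> \<eta>) sequentially" if "\<eta> > 0" for \<eta>
      using mobility_uniform_conv[OF that] by simp
    show "eventually (\<lambda>k. (\<integral>p. (norm (\<phi> p))\<^sup>2 \<partial>L) \<le> (\<integral>p. (norm (\<phi> p))\<^sup>2 \<partial>L)) sequentially"
      by simp
  qed measurable
  have split: "(\<integral>p. m (zs k p) * (norm (\<phi> p))\<^sup>2 \<partial>L)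
      = (\<integral>p. m (z p) * (norm (\<phi> p))\<^sup>2 \<partial>L) + (\<integral>p. (m (zs k p) - m (z p)) * (\<phi> p \<bullet> \<phi> p) \<partial>L)" for k
  proof -
    have "integrable L (\<lambda>p. m (z p) * (\<phi> p \<bullet> \<phi> p))"
      using mobility_bounds(2) by (intro integrable_weighted_inner[OF \<phi> \<phi>, where B=m_max]) auto
    moreover have "integrable L (\<lambda>p. (m (zs k p) - m (z p)) * (\<phi> p \<bullet> \<phi> p))"
      using mobility_difference_bounded by (intro integrable_weighted_inner[OF \<phi> \<phi>, where B=m_max]) auto
    moreover have "m (zs k p) * (norm (\<phi> p))\<^sup>2 = m (z p) * (\<phi> p \<bullet> \<phi> p) + (m (zs k p) - m (z p)) * (\<phi> p \<bullet> \<phi> p)" for p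
      by (simp add: power2_norm_eq_inner algebra_simps)
    ultimately show ?thesis
      by (simp add: power2_norm_eq_inner)
  qed
  have lim_norm: "(\<lambda>k. \<integral>p. m (zs k p) * (norm (\<phi> p))\<^sup>2 \<partial>L) \<longlonglongrightarrow> (\<integral>p. m (z p) * (norm (\<phi> p))\<^sup>2 \<partial>L)"
    using tendsto_add[OF tendsto_const remainder] by (simp add: split)
  have "G p \<bullet> \<phi> p = (norm (\<phi> p))\<^sup>2" for p
    by (simp add: \<phi>_def power2_norm_eq_inner indicator_def)
  then have lim_inner: "(\<lambda>k. \<integral>p. m (zs k p) * (Gs k p \<bullet> \<phi> p) \<partial>L) \<longlonglongrightarrow> (\<integral>p. m (z p) * (norm (\<phi> p))\<^sup>2 \<partial>L)"
    using flux_weak_on_exhaustion(2)[OF \<phi> vanish] by simp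
  show ?thesis
    unfolding \<phi>_def[symmetric]
    by (rule weak_limit_weighted_norm_le[where w="\<lambda>k p. m (zs k p)", OF _ _ Gs_square_integrable weighted_energy_le \<phi> lim_inner lim_norm])
      (use mobility_bounds(1) in auto)
qed

lemma limit_energy_integrable:
  "integrable L (\<lambda>p. indicator positivity_set p * (m (z p) * (norm (G p))\<^sup>2))"
proof (rule integrable_monotone_convergence)
  define f where "f j p = m (z p) * (norm (indicator (exhaustion j) p *\<^sub>R G p))\<^sup>2" for j p
  have f_eq: "f j p = indicator (exhaustion j) p * (m (z p) * (norm (G p))\<^sup>2)" for j p
    by (simp add: f_def indicator_def)
  have nonneg: "0 \<le> m (z p) * (norm (G p))\<^sup>2" if "p \<in> space L" for p
    using mobility_bounds(2)[of p] that by simp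
  show f_int: "integrable L (f j)" for j
  proof -
    have "square_integrable L (\<lambda>p. indicator (exhaustion j) p *\<^sub>R G p)"
      by (rule square_integrable_indicator_G[OF exhaustion_sets]) (auto simp: exhaustion_def)
    then have "integrable L (\<lambda>p. m (z p) * ((indicator (exhaustion j) p *\<^sub>R G p) \<bullet> (indicator (exhaustion j) p *\<^sub>R G p)))"
      using mobility_bounds(2) by (intro integrable_weighted_inner[where B=m_max]) auto
    then show ?thesis
      by (simp only: f_def[abs_def] power2_norm_eq_inner)
  qed
  show "AE p in L. mono (\<lambda>j. f j p)"
    using exhaustion_mono nonneg
    by (intro AE_I2 monoI incseq_SucI) (auto simp: f_eq indicator_def)
  show "AE p in L. (\<lambda>j. f j p) \<longlonglongrightarrow> indicator positivity_set p * (m (z p) * (norm (G p))\<^sup>2)"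
  proof (rule AE_I2)
    fix p
    show "(\<lambda>j. f j p) \<longlonglongrightarrow> indicator positivity_set p * (m (z p) * (norm (G p))\<^sup>2)"
    proof (cases "p \<in> positivity_set")
      case True
      have "eventually (\<lambda>j. f j p = indicator positivity_set p * (m (z p) * (norm (G p))\<^sup>2)) sequentially"
        using eventually_in_exhaustion[OF True] by eventually_elim (simp add: f_eq True)
      then show ?thesis
        by (rule tendsto_eventually)
    next
      case False
      then have "f j p = 0" for j
        using exhaustion_subset by (auto simp: f_eq indicator_def)
      then show ?thesis
        using False by simp
    qed
  qed
  have "incseq (\<lambda>j. integral\<^sup>L L (f j))"
    using exhaustion_mono nonneg f_int
    by (intro incseq_SucI integral_mono) (auto simp: f_eq indicator_def)
  moreover have "integral\<^sup>L L (f j) \<le> C" for j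
    using limit_energy_on_exhaustion[of j] by (simp add: f_def[abs_def])
  ultimately show "(\<lambda>j. integral\<^sup>L L (f j)) \<longlonglongrightarrow> (SUP j. integral\<^sup>L L (f j))"
    by (intro LIMSEQ_incseq_SUP bdd_aboveI2[where M=C]) auto
  have "(\<lambda>p. m (z p) * (norm (G p))\<^sup>2) \<in> borel_measurable (lebesgue_on positivity_set)"
    by measurable
  then show "(\<lambda>p. indicator positivity_set p * (m (z p) * (norm (G p))\<^sup>2)) \<in> borel_measurable L"
    using lebesgue_on_subset(1)[OF X_sets positivity_set_sets positivity_set_subset, of "\<lambda>p. m (z p) * (norm (G p))\<^sup>2"] by simp
qed

lemma limit_flux_L2: "L2_on positivity_set (\<lambda>p. m (z p) *\<^sub>R G p)"
proof -
  have meas: "(\<lambda>p. m (z p) *\<^sub>R G p) \<in> borel_measurable (lebesgue_on positivity_set)"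
    by measurable
  have "integrable L (\<lambda>p. indicator positivity_set p * (norm (m (z p) *\<^sub>R G p))\<^sup>2)"
  proof (rule integrable_abs_integral_le(1))
    show "integrable L (\<lambda>p. m_max * (indicator positivity_set p * (m (z p) * (norm (G p))\<^sup>2)))"
      using limit_energy_integrable by simp
    have "(\<lambda>p. (norm (m (z p) *\<^sub>R G p))\<^sup>2) \<in> borel_measurable (lebesgue_on positivity_set)"
      using meas by measurable
    then show "(\<lambda>p. indicator positivity_set p * (norm (m (z p) *\<^sub>R G p))\<^sup>2) \<in> borel_measurable L"
      using lebesgue_on_subset(1)[OF X_sets positivity_set_sets positivity_set_subset,
          of "\<lambda>p. (norm (m (z p) *\<^sub>R G p))\<^sup>2"]
      by simp
    fix p assume "p \<in> space L"
    then have "0 \<le> m (z p)" "m (z p) \<le> m_max"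
      using mobility_bounds(2) by auto
    then have "(norm (m (z p) *\<^sub>R G p))\<^sup>2 \<le> m_max * (m (z p) * (norm (G p))\<^sup>2)"
      by (rule power2_norm_scaleR_le)
    then show "\<bar>indicator positivity_set p * (norm (m (z p) *\<^sub>R G p))\<^sup>2\<bar>
        \<le> m_max * (indicator positivity_set p * (m (z p) * (norm (G p))\<^sup>2))"
      by (simp add: indicator_def)
  qed
  then show ?thesis
    using meas lebesgue_on_subset(2)[OF X_sets positivity_set_sets positivity_set_subset,
        of "\<lambda>p. (norm (m (z p) *\<^sub>R G p))\<^sup>2"]
    by (simp add: L2_on_def)
qed

lemma flux_weak_on_positivity_set:
  "weak_L2_conv positivity_set (\<lambda>k p. m (zs k p) *\<^sub>R Gs k p) (\<lambda>p. m (z p) *\<^sub>R G p)"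
  unfolding weak_L2_conv_def
proof (intro conjI allI impI)
  show "L2_on positivity_set (\<lambda>p. m (zs k p) *\<^sub>R Gs k p)" for k
    using flux_square_integrable
    by (intro L2_on_subset[OF X_sets positivity_set_sets positivity_set_subset])
       (simp add: L2_on_iff_square_integrable)
  show "L2_on positivity_set (\<lambda>p. m (z p) *\<^sub>R G p)"
    by (rule limit_flux_L2)
  fix g :: "'a \<Rightarrow> 'c" assume g: "L2_on positivity_set g"
  define \<gamma> where "\<gamma> p = indicator positivity_set p *\<^sub>R g p" for p
  define f where "f p = indicator positivity_set p *\<^sub>R (m (z p) *\<^sub>R G p)" for p
  define \<phi> where "\<phi> j p = indicator (exhaustion j) p *\<^sub>R \<gamma> p" for j p
  have \<gamma>: "square_integrable L \<gamma>"
    using g L2_on_indicator_iff[OF X_sets positivity_set_sets positivity_set_subset, of g]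
    by (simp add: \<gamma>_def[abs_def] L2_on_iff_square_integrable)
  have f: "square_integrable L f"
    using limit_flux_L2 L2_on_indicator_iff[OF X_sets positivity_set_sets positivity_set_subset,
        of "\<lambda>p. m (z p) *\<^sub>R G p"]
    unfolding f_def[abs_def] L2_on_iff_square_integrable by blast
  have "exhaustion j \<in> sets L" for j
    using exhaustion_subset positivity_set_subset by (intro sets_lebesgue_onI) auto
  then have \<phi>: "square_integrable L (\<phi> j)" for j
    unfolding \<phi>_def by (intro square_integrable_scaleR[OF \<gamma>, where B=1]) (auto simp: indicator_def)
  have approx: "(\<lambda>j. \<integral>p. (norm (\<gamma> p - \<phi> j p))\<^sup>2 \<partial>L) \<longlonglongrightarrow> 0"
    unfolding \<phi>_def
    by (rule square_integral_indicator_complement_tendsto_zero[OF \<gamma> \<open>\<And>j. exhaustion j \<in> sets L\<close>])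
       (auto simp: \<gamma>_def indicator_def intro: eventually_in_exhaustion split: if_splits)
  have weak: "(\<lambda>k. \<integral>p. (m (zs k p) *\<^sub>R Gs k p) \<bullet> \<phi> j p \<partial>L) \<longlonglongrightarrow> (\<integral>p. f p \<bullet> \<phi> j p \<partial>L)" for j
  proof -
    have vanish: "\<phi> j p = 0" if "p \<notin> exhaustion j" for p
      using that by (simp add: \<phi>_def)
    have "f p \<bullet> \<phi> j p = m (z p) * (G p \<bullet> \<phi> j p)" for p
      using exhaustion_subset by (auto simp: f_def \<phi>_def indicator_def)
    then show ?thesis
      using flux_weak_on_exhaustion(2)[OF \<phi> vanish] by simp
  qed
  have "(\<lambda>k. \<integral>p. (m (zs k p) *\<^sub>R Gs k p) \<bullet> \<gamma> p \<partial>L) \<longlonglongrightarrow> (\<integral>p. f p \<bullet> \<gamma> p \<partial>L)"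
    by (rule weak_convergence_by_approximation[OF flux_square_integrable flux_norm_le f \<gamma> \<phi> approx weak])
  moreover have "(\<integral>p. w p * (H p \<bullet> g p) \<partial>lebesgue_on positivity_set) = (\<integral>p. w p * (H p \<bullet> \<gamma> p) \<partial>L)"
    for w :: "'a \<Rightarrow> real" and H :: "'a \<Rightarrow> 'c"
    using lebesgue_on_subset(3)[OF X_sets positivity_set_sets positivity_set_subset, of "\<lambda>p. w p * (H p \<bullet> g p)"]
    by (simp add: \<gamma>_def mult.left_commute)
  moreover have "f p \<bullet> \<gamma> p = (m (z p) *\<^sub>R G p) \<bullet> \<gamma> p" for p
    by (simp add: f_def \<gamma>_def indicator_def)
  ultimately show "(\<lambda>k. \<integral>p. (m (zs k p) *\<^sub>R Gs k p) \<bullet> g p \<partial>lebesgue_on positivity_set)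
      \<longlonglongrightarrow> (\<integral>p. (m (z p) *\<^sub>R G p) \<bullet> g p \<partial>lebesgue_on positivity_set)"
    by simp
qed

end

definition cylinder :: "(nat \<Rightarrow> nat \<Rightarrow> 'a set) \<Rightarrow> (nat \<Rightarrow> real) \<Rightarrow> nat \<Rightarrow> ('a \<times> real) set" where
  "cylinder U ts n = (case prod_decode n of (j, k) \<Rightarrow> U j k \<times> {0<..<ts j})"

lemma cylinder_sets_weak_conv:
  assumes "\<And>j k. open (U j k)" and "\<And>j k. weak_L2H1_conv (U j k) (ts j) mus Gs mu G"
  shows "cylinder U ts n \<in> sets lebesgue" and "weak_L2_conv (cylinder U ts n) Gs G"
proof -
  obtain j k where "prod_decode n = (j, k)"
    by (cases "prod_decode n")
  then have "cylinder U ts n = U j k \<times> {0<..<ts j}"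
    by (simp add: cylinder_def)
  then show "cylinder U ts n \<in> sets lebesgue" and "weak_L2_conv (cylinder U ts n) Gs G"
    using assms[of j k] by (auto simp: weak_L2H1_conv_def open_Times)
qed

lemma cylinders_cover:
  fixes \<Omega> :: "'a::euclidean_space set" and z :: "'a \<times> real \<Rightarrow> real"
    and ts :: "nat \<Rightarrow> real" and U :: "nat \<Rightarrow> nat \<Rightarrow> 'a set"
  assumes z_cont: "continuous_on (\<Omega> \<times> {0<..<T}) z"
    and ts_dense: "{0..T} \<subseteq> closure (range ts)"
    and F: "{p \<in> \<Omega> \<times> {0<..<T}. 0 < z p} \<subseteq> F"
    and U_fine: "\<And>j. fine_rep \<Omega> {x. (x, ts j) \<in> F} (U j)"
  shows "{p \<in> \<Omega> \<times> {0<..<T}. 0 < z p} \<subseteq> (\<Union>n. cylinder U ts n)"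
proof
  fix p assume "p \<in> {p \<in> \<Omega> \<times> {0<..<T}. 0 < z p}"
  then obtain x t where p: "p = (x, t)" and xt: "(x, t) \<in> \<Omega> \<times> {0<..<T}" and pos: "0 < z (x, t)"
    by (cases p) auto
  obtain r where "r > 0"
    and r: "\<And>q. q \<in> \<Omega> \<times> {0<..<T} \<Longrightarrow> dist q (x, t) < r \<Longrightarrow> dist (z q) (z (x, t)) < z (x, t)"
    using z_cont xt pos unfolding continuous_on_iff by blast
  define b where "b = min T (t + r)"
  have "t < b"
    using xt \<open>r > 0\<close> by (auto simp: b_def)
  have "(t + b) / 2 \<in> {0..T}"
    using xt \<open>t < b\<close> by (auto simp: b_def)
  then have "(t + b) / 2 \<in> closure (range ts)"
    using ts_dense by blast
  moreover have "(b - t) / 2 > 0"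
    using \<open>t < b\<close> by simp
  ultimately obtain s where "s \<in> range ts" "dist s ((t + b) / 2) < (b - t) / 2"
    unfolding closure_approachable by blast
  then obtain j where "dist (ts j) ((t + b) / 2) < (b - t) / 2"
    by blast
  then have s: "t < ts j" "ts j < b"
    by (auto simp: dist_real_def abs_less_iff field_simps)
  then have "(x, ts j) \<in> \<Omega> \<times> {0<..<T}"
    using xt by (auto simp: b_def)
  moreover have "dist (x, ts j) (x, t) < r"
    using s by (simp add: dist_Pair_Pair dist_real_def b_def)
  ultimately have "0 < z (x, ts j)"
    using r[of "(x, ts j)"] by (auto simp: dist_real_def)
  then have "(x, ts j) \<in> F"
    using F \<open>(x, ts j) \<in> \<Omega> \<times> {0<..<T}\<close> by blast
  then obtain V k where "x \<in> V" "V \<inter> \<Omega> \<subseteq> U j k"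
    using U_fine[of j] unfolding fine_rep_def by blast
  then have "p \<in> cylinder U ts (prod_encode (j, k))"
    using xt s by (auto simp: p cylinder_def)
  then show "p \<in> (\<Union>n. cylinder U ts n)"
    by blast
qed

theorem mainTheorem11:
  fixes \<Omega> :: "'a::euclidean_space set"
    and T C :: real
    and m :: "real \<Rightarrow> real"
    and eps :: "nat \<Rightarrow> real"
    and zs :: "nat \<Rightarrow> 'a \<times> real \<Rightarrow> real" and z :: "'a \<times> real \<Rightarrow> real"
    and mus :: "nat \<Rightarrow> 'a \<times> real \<Rightarrow> real" and Gs :: "nat \<Rightarrow> 'a \<times> real \<Rightarrow> 'a"
    and mu :: "'a \<times> real \<Rightarrow> real" and G :: "'a \<times> real \<Rightarrow> 'a"
    and ts :: "nat \<Rightarrow> real" and U :: "nat \<Rightarrow> nat \<Rightarrow> 'a set"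
    and \<Omega>T F :: "('a \<times> real) set"
  assumes dom: "C2_domain \<Omega>" "bounded \<Omega>"
    and T: "T > 0"
    and \<Omega>T_def: "\<Omega>T = \<Omega> \<times> {0<..<T}"
    and m_cont: "continuous_on {0..1} m"
    and m_nonneg: "\<forall>s\<in>{0..1}. m s \<ge> 0"
    and m_zero: "\<forall>s\<in>{0..1}. m s = 0 \<longleftrightarrow> s = 0"
    and eps_pos: "\<forall>k. eps k > 0" and eps_lim: "eps \<longlonglongrightarrow> 0"
    and zs_cont: "\<forall>k. continuous_on (closure \<Omega>T) (zs k)"
    and zs_range: "\<forall>k. \<forall>p\<in>closure \<Omega>T. 0 \<le> zs k p \<and> zs k p \<le> 1"
    and zs_lim: "uniform_limit (closure \<Omega>T) zs z sequentially"
    and mus_reg: "\<forall>k. L2H1 \<Omega> T (mus k) (Gs k)"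
    and bound: "\<forall>k. (\<integral>p. (m (zs k p) + eps k) * (norm (Gs k p))\<^sup>2 \<partial>lebesgue_on \<Omega>T) \<le> C\<^sup>2"
    and F_def: "F = {p \<in> closure \<Omega>T. z p > 0}"
    and ts_range: "range ts \<subseteq> {0..T}" and ts_dense: "{0..T} \<subseteq> closure (range ts)"
    and ts_T: "T \<in> range ts"
    and U_fine: "\<forall>j. fine_rep \<Omega> {x. (x, ts j) \<in> F} (U j)"
    and mu_lim: "\<forall>j k. weak_L2H1_conv (U j k) (ts j) mus Gs mu G"
  shows "weak_L2_conv (F \<inter> \<Omega>T) (\<lambda>k p. m (zs k p) *\<^sub>R Gs k p) (\<lambda>p. m (z p) *\<^sub>R G p)
       \<and> strong_L2_conv (\<Omega>T - F) (\<lambda>k p. m (zs k p) *\<^sub>R Gs k p) (\<lambda>p. 0)"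
proof -
  have U_open: "open (U j k)" for j k
    using U_fine by (simp add: fine_rep_def)
  have zs_cont_\<Omega>T: "continuous_on \<Omega>T (zs k)" for k
    using zs_cont continuous_on_subset[OF _ closure_subset] by blast
  have zs_lim_\<Omega>T: "uniform_limit \<Omega>T zs z sequentially"
    by (rule uniform_limit_on_subset[OF zs_lim closure_subset])
  have "continuous_on \<Omega>T z"
    using zs_cont_\<Omega>T by (intro uniform_limit_theorem[OF _ zs_lim_\<Omega>T]) auto
  moreover have "{p \<in> \<Omega>T. 0 < z p} \<subseteq> F"
    unfolding F_def using closure_subset[of \<Omega>T] by blast
  ultimately have cover: "{p \<in> \<Omega>T. 0 < z p} \<subseteq> (\<Union>n. cylinder U ts n)"
    unfolding \<Omega>T_def by (rule cylinders_cover[OF _ ts_dense _ U_fine[rule_format]])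
  interpret degenerate_flux_limit \<Omega>T m zs z Gs G eps "C\<^sup>2" "cylinder U ts"
  proof
    show "open \<Omega>T"
      using dom(1) by (simp add: \<Omega>T_def C2_domain_def open_Times)
    show "0 \<le> m s" "m s = 0 \<longleftrightarrow> s = 0" if "s \<in> {0..1}" for s
      using m_nonneg m_zero that by auto
    show "zs k p \<in> {0..1}" if "p \<in> \<Omega>T" for k p
      using zs_range subsetD[OF closure_subset that] by auto
    show "L2_on \<Omega>T (Gs k)" for k
      using mus_reg by (simp add: L2H1_def \<Omega>T_def)
    show "0 \<le> eps k" for k
      using eps_pos less_imp_le by blast
    show "cylinder U ts n \<in> sets lebesgue" "weak_L2_conv (cylinder U ts n) Gs G" for n
      using U_open mu_lim by (blast intro: cylinder_sets_weak_conv)+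
  qed (use m_cont zs_cont_\<Omega>T zs_lim_\<Omega>T bound cover in blast)+
  have "F \<inter> \<Omega>T = positivity_set" "\<Omega>T - F = \<Omega>T - positivity_set"
    unfolding F_def positivity_set_def using closure_subset[of \<Omega>T] by blast+
  then show ?thesis
    using flux_weak_on_positivity_set flux_tendsto_zero_off_positivity_set by simp
qed

end
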